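(* Let $(X,f,\mu)$ and $(Y,g,\nu)$ be ergodic probability measure preserving dynamical systems on relatively compact metric spaces $X$ and $Y$, with $g$ invertible, and let $h\colon X\to\mathbb Z$ be measurable with $\int_X h\,d\mu=0$. Let $F(x,y)=(f(x),g^{h(x)}(y))$ on $Z=X\times Y$, endowed with the sup metric $d$. Then for $\mu$-a.e. $x\in X$ and every $y\in Y$, \[ \limsup_{r\to0}\frac{\log\tau_r^F(x,y)}{-\log r}\le \limsup_{r\to0}\frac{\log\tau_r^{\widetilde F}(x)}{-\log r}. \]
   Context: Write $h_n=\sum_{k=0}^{n-1}h\circ f^k$, so that $F^n(x,y)=(f^n(x),g^{h_n(x)}(y))$. The first return time of $F$ is $\tau_r^F(z)=\inf\{n\ge1: d(F^n(z),z)<r\}$ for $z\in Z$, $r>0$. The $\mathbb Z$-extension is $\widetilde F\colon X\times\mathbb Z\to X\times\mathbb Z$, $\widetilde F(x,q)=(f(x),q+h(x))$, and its return time to the $r$-neighbourhood of the starting point (independent of $q$) is $\tau_r^{\widetilde F}(x)=\inf\{n\ge1: d(f^n(x),x)<r,\ h_n(x)=0\}$. *)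

theory Defs
  imports "HOL-Probability.Probability"
begin

definition mp_map :: "'a measure \<Rightarrow> ('a \<Rightarrow> 'a) \<Rightarrow> bool" where
  "mp_map M T \<longleftrightarrow> T \<in> measurable M M \<and> distr M M T = M"

definition ergodic_mp :: "'a measure \<Rightarrow> ('a \<Rightarrow> 'a) \<Rightarrow> bool" where
  "ergodic_mp M T \<longleftrightarrow> mp_map M T \<and>
     (\<forall>A \<in> sets M. T -` A \<inter> space M = A \<longrightarrow> measure M A = 0 \<or> measure M A = 1)"

definition ipow :: "'b set \<Rightarrow> ('b \<Rightarrow> 'b) \<Rightarrow> int \<Rightarrow> 'b \<Rightarrow> 'b" where
  "ipow Y g k = (if 0 \<le> k then g ^^ nat k else inv_into Y g ^^ nat (- k))"

definition hsum :: "('a \<Rightarrow> 'a) \<Rightarrow> ('a \<Rightarrow> int) \<Rightarrow> nat \<Rightarrow> 'a \<Rightarrow> int" where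
  "hsum f h n x = (\<Sum>k<n. h ((f ^^ k) x))"

definition skew :: "'b set \<Rightarrow> ('a \<Rightarrow> 'a) \<Rightarrow> ('b \<Rightarrow> 'b) \<Rightarrow> ('a \<Rightarrow> int) \<Rightarrow> 'a \<times> 'b \<Rightarrow> 'a \<times> 'b" where
  "skew Y f g h = (\<lambda>(x, y). (f x, ipow Y g (h x) y))"

definition supdist :: "'a::metric_space \<times> 'b::metric_space \<Rightarrow> 'a \<times> 'b \<Rightarrow> real" where
  "supdist z w = max (dist (fst z) (fst w)) (dist (snd z) (snd w))"

definition ret_time :: "('c \<Rightarrow> 'c) \<Rightarrow> ('c \<Rightarrow> 'c \<Rightarrow> real) \<Rightarrow> real \<Rightarrow> 'c \<Rightarrow> ereal" where
  "ret_time T d r z =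
     (if \<exists>n::nat. 1 \<le> n \<and> d ((T ^^ n) z) z < r
      then ereal (real (LEAST n::nat. 1 \<le> n \<and> d ((T ^^ n) z) z < r)) else \<infinity>)"

(* return time of the Z-extension: inf {n>=1. d(f^n x, x) < r and h_n(x) = 0} *)
definition ext_ret_time :: "('a::metric_space \<Rightarrow> 'a) \<Rightarrow> ('a \<Rightarrow> int) \<Rightarrow> real \<Rightarrow> 'a \<Rightarrow> ereal" where
  "ext_ret_time f h r x =
     (if \<exists>n::nat. 1 \<le> n \<and> dist ((f ^^ n) x) x < r \<and> hsum f h n x = 0
      then ereal (real (LEAST n::nat. 1 \<le> n \<and> dist ((f ^^ n) x) x < r \<and> hsum f h n x = 0))
      else \<infinity>)"

definition elog :: "ereal \<Rightarrow> ereal" where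
  "elog t = (case t of ereal s \<Rightarrow> ereal (ln s) | PInfty \<Rightarrow> \<infinity> | MInfty \<Rightarrow> -\<infinity>)"

definition upper_rate :: "(real \<Rightarrow> ereal) \<Rightarrow> ereal" where
  "upper_rate tau = Limsup (at_right 0) (\<lambda>r. elog (tau r) / ereal (- ln r))"

end

theory Submission
  imports Defs
begin

text \<open>
  If \<open>h\<^sub>n(x) = 0\<close> then \<open>F\<^sup>n(x, y) = (f\<^sup>n(x), y)\<close>, so the sup distance from \<open>F\<^sup>n(x, y)\<close> to
  \<open>(x, y)\<close> is just \<open>d(f\<^sup>n(x), x)\<close>. Every return time of the \<open>\<int>\<close>-extension is therefore a
  return time of \<open>F\<close>, whence \<open>\<tau>\<^sup>F\<^sub>r(x, y) \<le> \<tau>\<^sub>r(x)\<close> for all \<open>r\<close>, and the inequality of rates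
  follows by monotonicity of \<open>log\<close> and of \<open>limsup\<close>. This holds for every \<open>x\<close>.
\<close>

lemma
  assumes "bij_betw g Y Y" "y \<in> Y"
  shows bij_betw_apply_in: "g y \<in> Y"
    and inv_into_apply_in: "inv_into Y g y \<in> Y"
    and apply_inv_into_apply: "g (inv_into Y g y) = y"
    and inv_into_apply_apply: "inv_into Y g (g y) = y"
  using assms by (auto simp: bij_betw_def intro: inv_into_into f_inv_into_f inv_into_f_f)

lemma ipow_in:
  assumes "bij_betw g Y Y" "y \<in> Y"
  shows "ipow Y g k y \<in> Y"
proof -
  have "(g ^^ n) y \<in> Y \<and> (inv_into Y g ^^ n) y \<in> Y" for n
    by (induction n) (auto simp: assms bij_betw_apply_in inv_into_apply_in)
  then show ?thesis by (simp add: ipow_def)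
qed

lemma ipow_succ:
  assumes "bij_betw g Y Y" "y \<in> Y"
  shows "ipow Y g (k + 1) y = g (ipow Y g k y)"
proof (cases "0 \<le> k")
  case True
  then have "nat (k + 1) = Suc (nat k)" by simp
  with True show ?thesis by (simp add: ipow_def)
next
  case False
  then have "nat (- k) = Suc (nat (- (k + 1)))" by simp
  moreover have "ipow Y g (k + 1) y \<in> Y" using assms by (rule ipow_in)
  ultimately show ?thesis
    using False assms by (auto simp: ipow_def apply_inv_into_apply split: if_splits)
qed

lemma ipow_pred:
  assumes "bij_betw g Y Y" "y \<in> Y"
  shows "ipow Y g (k - 1) y = inv_into Y g (ipow Y g k y)"
  using ipow_succ[OF assms, of "k - 1"] inv_into_apply_apply[OF assms(1) ipow_in[OF assms]]
  by simp

lemma ipow_add: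
  assumes "bij_betw g Y Y" "y \<in> Y"
  shows "ipow Y g a (ipow Y g b y) = ipow Y g (a + b) y"
proof (induction a rule: int_induct[where k = 0])
  case base
  then show ?case by (simp add: ipow_def)
next
  case (step1 i)
  then show ?case
    using ipow_succ[OF assms(1) ipow_in[OF assms]] ipow_succ[OF assms]
    by (metis add.commute add.left_commute)
next
  case (step2 i)
  then show ?case
    using ipow_pred[OF assms(1) ipow_in[OF assms]] ipow_pred[OF assms]
    by (metis add.commute add_diff_eq)
qed

lemma skew_funpow:
  assumes "bij_betw g Y Y" "y \<in> Y"
  shows "(skew Y f g h ^^ n) (x, y) = ((f ^^ n) x, ipow Y g (hsum f h n x) y)"
proof (induction n)
  case 0
  then show ?case by (simp add: ipow_def hsum_def)
next
  case (Suc n)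
  have "hsum f h (Suc n) x = h ((f ^^ n) x) + hsum f h n x"
    by (simp add: hsum_def)
  with Suc show ?case by (simp add: skew_def ipow_add[OF assms])
qed

lemma ret_time_le:
  assumes "1 \<le> n" "d ((T ^^ n) z) z < r"
  shows "ret_time T d r z \<le> ereal (real n)"
proof -
  have "(LEAST m. 1 \<le> m \<and> d ((T ^^ m) z) z < r) \<le> n"
    using assms by (intro Least_le) simp
  with assms show ?thesis by (auto simp: ret_time_def)
qed

lemma ret_time_pos: "0 < ret_time T d r z"
proof (cases "\<exists>n::nat. 1 \<le> n \<and> d ((T ^^ n) z) z < r")
  case True
  then have "1 \<le> (LEAST n::nat. 1 \<le> n \<and> d ((T ^^ n) z) z < r)"
    by (metis (mono_tags, lifting) LeastI_ex)
  with True show ?thesis by (simp add: ret_time_def)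
next
  case False
  then show ?thesis unfolding ret_time_def by (subst if_not_P) simp_all
qed

lemma ret_time_skew_le_ext_ret_time:
  assumes "bij_betw g Y Y" "y \<in> Y"
  shows "ret_time (skew Y f g h) supdist r (x, y) \<le> ext_ret_time f h r x"
proof (cases "\<exists>n::nat. 1 \<le> n \<and> dist ((f ^^ n) x) x < r \<and> hsum f h n x = 0")
  case True
  define n where "n = (LEAST n::nat. 1 \<le> n \<and> dist ((f ^^ n) x) x < r \<and> hsum f h n x = 0)"
  have n: "1 \<le> n" "dist ((f ^^ n) x) x < r" "hsum f h n x = 0"
    unfolding n_def using LeastI_ex[OF True] by auto
  then have "supdist ((skew Y f g h ^^ n) (x, y)) (x, y) < r"
    by (simp add: skew_funpow[OF assms] supdist_def ipow_def)
  with n(1) have "ret_time (skew Y f g h) supdist r (x, y) \<le> ereal (real n)"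
    by (rule ret_time_le)
  with True show ?thesis by (simp add: ext_ret_time_def n_def)
next
  case False
  then show ?thesis unfolding ext_ret_time_def by (subst if_not_P) simp_all
qed

lemma elog_mono:
  assumes "0 < a" "a \<le> b"
  shows "elog a \<le> elog b"
  using assms by (cases a; cases b) (auto simp: elog_def)

lemma upper_rate_mono:
  assumes "\<forall>\<^sub>F r in at_right 0. 0 < \<sigma> r \<and> \<sigma> r \<le> \<tau> r"
  shows "upper_rate \<sigma> \<le> upper_rate \<tau>"
  unfolding upper_rate_def
proof (rule Limsup_mono)
  have "\<forall>\<^sub>F r in at_right (0::real). r < 1"
    by (simp add: eventually_at_right_field) (auto intro: exI[of _ 1])
  moreover have "\<forall>\<^sub>F r in at_right (0::real). 0 < r"
    by (simp add: eventually_at_right_field) (auto intro: exI[of _ 1])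
  ultimately show "\<forall>\<^sub>F r in at_right 0.
      elog (\<sigma> r) / ereal (- ln r) \<le> elog (\<tau> r) / ereal (- ln r)"
    using assms
    by eventually_elim (simp add: elog_mono ereal_divide_right_mono)
qed

theorem proposition2p1:
  fixes M :: "'a::metric_space measure" and N :: "'b::metric_space measure"
    and X :: "'a set" and Y :: "'b set"
    and f :: "'a \<Rightarrow> 'a" and g :: "'b \<Rightarrow> 'b" and h :: "'a \<Rightarrow> int"
  assumes "prob_space M" and "prob_space N"
    and "sets M = sets (restrict_space borel X)" and "space M = X"
    and "sets N = sets (restrict_space borel Y)" and "space N = Y"
    and "compact (closure X)" and "compact (closure Y)"
    and "ergodic_mp M f" and "ergodic_mp N g"
    and "bij_betw g Y Y" and "inv_into Y g \<in> measurable N N"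
    and "h \<in> measurable M (count_space UNIV)"
    and "integrable M (\<lambda>x. real_of_int (h x))"
    and "(\<integral>x. real_of_int (h x) \<partial>M) = 0"
  shows "AE x in M. \<forall>y \<in> Y.
           upper_rate (\<lambda>r. ret_time (skew Y f g h) supdist r (x, y))
             \<le> upper_rate (\<lambda>r. ext_ret_time f h r x)"
proof (intro AE_I2 ballI upper_rate_mono always_eventually allI conjI)
  fix x y r
  assume "y \<in> Y"
  show "0 < ret_time (skew Y f g h) supdist r (x, y)"
    by (rule ret_time_pos)
  show "ret_time (skew Y f g h) supdist r (x, y) \<le> ext_ret_time f h r x"
    using \<open>bij_betw g Y Y\<close> \<open>y \<in> Y\<close> by (rule ret_time_skew_le_ext_ret_time)
qed

end
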